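(* For every integer $n\ge2$ there is a complete weighted graph $G=(V,w)$ on $n$ vertices with $\mathrm{cdim}(G)=2n-3$ and minimum cut weight $1$, such that for every $v\in V$ the star cut $\Delta(\{v\})$ is a minimum cut.
   Context: A complete weighted graph $G=(V,w)$ assigns a positive weight to every unordered pair of distinct vertices. For $\emptyset\ne X\subsetneq V$, $\Delta(X)$ is the set of edges with exactly one endpoint in $X$, of weight equal to the sum of their weights. $\mathcal{M}(G)$ is the set of minimum-weight cuts; $\chi(S)$ is the characteristic vector of $S$ indexed by the edges; $\mathrm{cdim}(G)=\dim\,\mathrm{span}\{\chi(S):S\in\mathcal{M}(G)\}$. *)

theory Defs
  imports "HOL-Analysis.Analysis" "HOL-Library.Function_Algebras"
begin

text \<open>Vertex set V = {0..<n}; edges of the complete graph are the unordered pairs {i,j}, i ~= j.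
  A weighting is a function w on edges (values off the edge set are irrelevant).\<close>

definition edges :: "nat \<Rightarrow> nat set set" where
  "edges n = {{i, j} | i j. i < n \<and> j < n \<and> i \<noteq> j}"

definition is_cut_side :: "nat \<Rightarrow> nat set \<Rightarrow> bool" where
  "is_cut_side n X \<longleftrightarrow> X \<noteq> {} \<and> X \<subset> {0..<n}"

definition delta :: "nat \<Rightarrow> nat set \<Rightarrow> nat set set" where
  "delta n X = {e \<in> edges n. card (e \<inter> X) = 1}"

definition cut_weight :: "nat \<Rightarrow> (nat set \<Rightarrow> real) \<Rightarrow> nat set \<Rightarrow> real" where
  "cut_weight n w X = sum w (delta n X)"

definition min_cut_value :: "nat \<Rightarrow> (nat set \<Rightarrow> real) \<Rightarrow> real" where
  "min_cut_value n w = Min {cut_weight n w X | X. is_cut_side n X}"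

definition min_cuts :: "nat \<Rightarrow> (nat set \<Rightarrow> real) \<Rightarrow> nat set set set" where
  "min_cuts n w = {delta n X | X. is_cut_side n X \<and> cut_weight n w X = min_cut_value n w}"

definition chi :: "nat set set \<Rightarrow> (nat set \<Rightarrow> real)" where
  "chi S = indicator S"

definition fscale :: "real \<Rightarrow> ('a \<Rightarrow> real) \<Rightarrow> ('a \<Rightarrow> real)" where
  "fscale c f = (\<lambda>x. c * f x)"

interpretation fvs: vector_space fscale
  by unfold_locales (auto simp: fscale_def algebra_simps fun_eq_iff)

definition cdim :: "nat \<Rightarrow> (nat set \<Rightarrow> real) \<Rightarrow> nat" where
  "cdim n w = fvs.dim (chi ` min_cuts n w)"

end

theory Submission
  imports Defs
begin

text \<open>Put vertex v on level min (max v 1) (n - 2) of a path, so that 0, 1 share the first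
  level and n - 2, n - 1 the last one, and give an edge between levels p and q the weight
  2 ^ -(|p - q| + 1). Every vertex then has weighted degree 1, and a vertex k \<le> n - 2 sends
  weight exactly 1/2 to the vertices below it. Adding k to a set Y \<subseteq> {..<k} therefore changes
  the cut weight by 1 - 2 w(Y, k) \<ge> 0, with equality only for Y = {..<k}. Since one side of every
  cut avoids n - 1, all cuts weigh at least 1, and the minimum cuts are the n stars together
  with the n - 3 prefix cuts {0..m}, 1 \<le> m \<le> n - 3. Evaluating a vanishing combination of their
  characteristic vectors on the edges {0, j}, {j, n - 1}, {0, n - 1} and {m, m + 1} shows that they
  are linearly independent, whence cdim = 2n - 3. For n = 2 the single edge gets weight 1.\<close>

lemma edges_doubleton_iff: "{a, b} \<in> edges n \<longleftrightarrow> a < n \<and> b < n \<and> a \<noteq> b"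
  unfolding edges_def by (auto simp: doubleton_eq_iff)

lemma delta_doubleton_iff:
  "{a, b} \<in> delta n X \<longleftrightarrow> a < n \<and> b < n \<and> a \<noteq> b \<and> (a \<in> X) \<noteq> (b \<in> X)"
  using edges_doubleton_iff[of a b n] unfolding delta_def by (cases "a \<in> X"; cases "b \<in> X") auto

lemma delta_eq_pairs:
  assumes "X \<subseteq> {0..<n}"
  shows "delta n X = (\<lambda>(i, j). {i, j}) ` (X \<times> ({0..<n} - X))"
proof (intro equalityI subsetI)
  fix e assume e: "e \<in> delta n X"
  then obtain a b where ab: "e = {a, b}"
    unfolding delta_def edges_def by blast
  from e consider "a \<in> X" "b \<in> {0..<n} - X" | "b \<in> X" "a \<in> {0..<n} - X"
    unfolding ab delta_doubleton_iff by auto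
  then show "e \<in> (\<lambda>(i, j). {i, j}) ` (X \<times> ({0..<n} - X))"
    by cases (auto simp: ab insert_commute)
next
  fix e assume "e \<in> (\<lambda>(i, j). {i, j}) ` (X \<times> ({0..<n} - X))"
  with assms show "e \<in> delta n X" by (auto simp: delta_doubleton_iff)
qed

lemma cut_weight_eq_pair_sum:
  assumes "X \<subseteq> {0..<n}"
  shows "cut_weight n w X = (\<Sum>i\<in>X. \<Sum>j\<in>{0..<n} - X. w {i, j})"
proof -
  have "inj_on (\<lambda>(i, j). {i, j}) (X \<times> ({0..<n} - X))"
    by (auto simp: inj_on_def doubleton_eq_iff)
  then show ?thesis
    unfolding cut_weight_def delta_eq_pairs[OF assms]
    by (simp add: sum.reindex sum.cartesian_product case_prod_unfold)
qed

lemma delta_complement: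
  assumes "X \<subseteq> {0..<n}"
  shows "delta n ({0..<n} - X) = delta n X"
proof (intro equalityI subsetI)
  fix e assume "e \<in> delta n ({0..<n} - X)"
  moreover from this obtain a b where "e = {a, b}" unfolding delta_def edges_def by blast
  ultimately show "e \<in> delta n X" by (auto simp: delta_doubleton_iff)
next
  fix e assume "e \<in> delta n X"
  moreover from this obtain a b where "e = {a, b}" unfolding delta_def edges_def by blast
  ultimately show "e \<in> delta n ({0..<n} - X)" by (auto simp: delta_doubleton_iff)
qed

lemma cut_weight_insert:
  assumes X: "X \<subseteq> {0..<n}" and k: "k < n" "k \<notin> X"
  shows "cut_weight n w (insert k X)
           = cut_weight n w X + cut_weight n w {k} - 2 * (\<Sum>i\<in>X. w {i, k})"
proof -
  let ?U = "{0..<n} - insert k X"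
  have fin: "finite X" using X finite_subset by blast
  have kX: "insert k X \<subseteq> {0..<n}" using X k by simp
  have "cut_weight n w (insert k X) = (\<Sum>j\<in>?U. w {k, j}) + (\<Sum>i\<in>X. \<Sum>j\<in>?U. w {i, j})"
    unfolding cut_weight_eq_pair_sum[OF kX] by (rule sum.insert) (use fin k in auto)
  moreover have "cut_weight n w X = (\<Sum>i\<in>X. w {i, k}) + (\<Sum>i\<in>X. \<Sum>j\<in>?U. w {i, j})"
  proof -
    have U: "{0..<n} - X = insert k ?U" using k by auto
    have "(\<Sum>j\<in>{0..<n} - X. w {i, j}) = w {i, k} + (\<Sum>j\<in>?U. w {i, j})" for i
      unfolding U by (rule sum.insert) auto
    then show ?thesis unfolding cut_weight_eq_pair_sum[OF X] by (simp add: sum.distrib)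
  qed
  moreover have "cut_weight n w {k} = (\<Sum>i\<in>X. w {i, k}) + (\<Sum>j\<in>?U. w {k, j})"
  proof -
    have U: "{0..<n} - {k} = X \<union> ?U" using X k by auto
    have "cut_weight n w {k} = (\<Sum>j\<in>{0..<n} - {k}. w {k, j})"
      using k by (simp add: cut_weight_eq_pair_sum)
    also have "\<dots> = (\<Sum>j\<in>X. w {k, j}) + (\<Sum>j\<in>?U. w {k, j})"
      unfolding U by (rule sum.union_disjoint) (use fin in auto)
    finally show ?thesis by (simp add: insert_commute)
  qed
  ultimately show ?thesis by linarith
qed

lemma is_cut_side_singleton:
  assumes "2 \<le> n" "v < n"
  shows "is_cut_side n {v}"
proof -
  have "(if v = 0 then 1 else 0) \<in> {0..<n} - {v}" using assms by simp
  then have "{v} \<noteq> {0..<n}" by blast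
  with assms show ?thesis unfolding is_cut_side_def by auto
qed

lemma is_cut_side_atMost:
  assumes "m < n - 1"
  shows "is_cut_side n {..m}"
proof -
  have "n - 1 \<in> {0..<n} - {..m}" using assms by simp
  then have "{..m} \<noteq> {0..<n}" by blast
  with assms show ?thesis unfolding is_cut_side_def by auto
qed

lemma is_cut_side_avoiding_last:
  assumes "is_cut_side n X"
  obtains Y where "Y \<subseteq> {..<n - 1}" "Y \<noteq> {}" "delta n Y = delta n X"
proof -
  have X: "X \<subseteq> {0..<n}" "X \<noteq> {}" "X \<noteq> {0..<n}"
    using assms unfolding is_cut_side_def by auto
  show ?thesis
  proof (cases "n - 1 \<in> X")
    case False
    have "X \<subseteq> {..<n - 1}"
    proof
      fix x assume "x \<in> X"
      with X False have "x < n" "x \<noteq> n - 1" by auto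
      then show "x \<in> {..<n - 1}" by simp
    qed
    with X show ?thesis by (intro that) auto
  next
    case True
    have "{0..<n} - X \<subseteq> {..<n - 1}"
    proof
      fix x assume "x \<in> {0..<n} - X"
      with True have "x < n" "x \<noteq> n - 1" by auto
      then show "x \<in> {..<n - 1}" by simp
    qed
    moreover have "{0..<n} - X \<noteq> {}" using X by auto
    ultimately show ?thesis using delta_complement[OF X(1)] by (intro that)
  qed
qed

lemma min_cut_value_eqI:
  assumes "\<And>X. is_cut_side n X \<Longrightarrow> c \<le> cut_weight n w X"
    and "is_cut_side n X\<^sub>0" "cut_weight n w X\<^sub>0 = c"
  shows "min_cut_value n w = c"
  unfolding min_cut_value_def
proof (rule Min_eqI)
  have "{cut_weight n w X |X. is_cut_side n X} \<subseteq> cut_weight n w ` Pow {0..<n}"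
    unfolding is_cut_side_def by blast
  then show "finite {cut_weight n w X |X. is_cut_side n X}"
    by (rule finite_subset) simp
  show "c \<le> y" if "y \<in> {cut_weight n w X |X. is_cut_side n X}" for y
    using that assms(1) by blast
  show "c \<in> {cut_weight n w X |X. is_cut_side n X}"
    using assms(2,3) by blast
qed

lemma chi_delta_doubleton:
  "i < n \<Longrightarrow> j < n \<Longrightarrow> i \<noteq> j
     \<Longrightarrow> chi (delta n X) {i, j} = (if (i \<in> X) \<noteq> (j \<in> X) then 1 else 0)"
  by (simp add: chi_def delta_doubleton_iff)

lemma sum_fun_apply: "(\<Sum>x\<in>A. (f x :: 'a \<Rightarrow> real)) e = (\<Sum>x\<in>A. f x e)"
  by (induction A rule: infinite_finite_induct) auto

lemma dim_image_eq_card: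
  fixes g :: "'i \<Rightarrow> 'a \<Rightarrow> real"
  assumes fin: "finite I"
    and only_trivial: "\<And>c. (\<Sum>x\<in>I. fscale (c x) (g x)) = 0 \<Longrightarrow> \<forall>x\<in>I. c x = 0"
  shows "fvs.dim (g ` I) = card I"
proof -
  have inj: "inj_on g I"
  proof (rule inj_onI, rule ccontr)
    fix x y assume xy: "x \<in> I" "y \<in> I" "g x = g y" "x \<noteq> y"
    define c where "c z = (if z = x then 1 else if z = y then -1 else 0 :: real)" for z
    have "(\<Sum>z\<in>I. fscale (c z) (g z)) = (\<Sum>z\<in>{x, y}. fscale (c z) (g z))"
      using xy fin by (intro sum.mono_neutral_right) (auto simp: c_def fscale_def fun_eq_iff)
    also have "\<dots> = 0" using xy by (simp add: c_def fscale_def fun_eq_iff)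
    finally have "\<forall>z\<in>I. c z = 0" by (rule only_trivial)
    with xy(1) show False by (auto simp: c_def)
  qed
  have "fvs.independent (g ` I)"
  proof (rule fvs.independent_if_scalars_zero)
    fix f v assume "(\<Sum>v\<in>g ` I. fscale (f v) v) = 0" "v \<in> g ` I"
    then show "f v = 0" using only_trivial[of "f \<circ> g"] by (auto simp: sum.reindex[OF inj])
  qed (use fin in simp)
  then show ?thesis by (simp add: fvs.dim_eq_card_independent card_image[OF inj])
qed

lemma delta_two:
  assumes "is_cut_side 2 X"
  shows "delta 2 X = {{0, 1}}"
proof -
  have "X \<subseteq> {0, 1}" "X \<noteq> {}" "X \<noteq> {0, 1}"
    using assms unfolding is_cut_side_def by auto
  then have X: "(0 \<in> X) \<noteq> (1 \<in> X)" by auto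
  have "e = {0, 1}" if "e \<in> delta 2 X" for e
  proof -
    from that obtain a b where "e = {a, b}" "a < 2" "b < 2" "a \<noteq> b"
      unfolding delta_def edges_def by blast
    then show ?thesis by (auto simp: less_2_cases_iff insert_commute)
  qed
  moreover have "{0, 1} \<in> delta 2 X" using X by (simp add: delta_doubleton_iff)
  ultimately show ?thesis by blast
qed

lemma min_cut_value_two: "min_cut_value 2 w = w {0, 1}"
proof (rule min_cut_value_eqI)
  show "is_cut_side 2 {0}" by (rule is_cut_side_singleton) simp_all
  then show "cut_weight 2 w {0} = w {0, 1}" by (simp add: cut_weight_def delta_two)
qed (simp add: cut_weight_def delta_two)

lemma min_cuts_two: "min_cuts 2 w = {{{0, 1}}}"
proof -
  have "is_cut_side 2 {0}" by (rule is_cut_side_singleton) simp_all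
  then show ?thesis
    unfolding min_cuts_def min_cut_value_two
    by (auto simp: cut_weight_def delta_two intro!: exI[of _ "{0}"])
qed

lemma cdim_two: "cdim 2 w = 1"
proof -
  have "chi {{0::nat, 1}} \<noteq> 0"
    by (auto simp: chi_def fun_eq_iff intro!: exI[of _ "{0, 1}"])
  then show ?thesis
    unfolding cdim_def min_cuts_two by (simp add: fvs.dim_eq_card_independent)
qed

definition level :: "nat \<Rightarrow> nat \<Rightarrow> nat" where
  "level n v = min (max v 1) (n - 2)"

definition pair_weight :: "nat \<Rightarrow> nat \<Rightarrow> nat \<Rightarrow> real" where
  "pair_weight n i j = (1/2) ^ nat \<bar>int (level n i) - int (level n j)\<bar> / 2"

definition edge_weight :: "nat \<Rightarrow> nat set \<Rightarrow> real" where
  "edge_weight n e = pair_weight n (Min e) (Max e)"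

lemma pair_weight_commute: "pair_weight n i j = pair_weight n j i"
  unfolding pair_weight_def by (simp add: abs_minus_commute)

lemma pair_weight_pos: "0 < pair_weight n i j"
  unfolding pair_weight_def by simp

lemma edge_weight_doubleton: "edge_weight n {i, j} = pair_weight n i j"
  unfolding edge_weight_def by (cases "i \<le> j") (auto simp: pair_weight_commute max_def min_def)

lemma pair_weight_inner:
  "1 \<le> i \<Longrightarrow> i \<le> j \<Longrightarrow> j \<le> n - 2 \<Longrightarrow> pair_weight n i j = (1/2) ^ (j - i) / 2"
  unfolding pair_weight_def level_def by (simp add: nat_diff_distrib)

lemma pair_weight_first: "pair_weight n 0 j = pair_weight n 1 j"
  unfolding pair_weight_def level_def by simp

lemma pair_weight_last: "3 \<le> n \<Longrightarrow> pair_weight n i (n - 1) = pair_weight n i (n - 2)"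
  unfolding pair_weight_def level_def by simp

lemma sum_half_powers_above:
  "a \<le> b \<Longrightarrow> (\<Sum>j\<in>{a<..b}. (1/2::real) ^ (j - a)) = 1 - (1/2) ^ (b - a)"
proof (induction b)
  case 0
  then show ?case by simp
next
  case (Suc b)
  show ?case
  proof (cases "a = Suc b")
    case False
    with Suc.prems have ab: "a \<le> b" by simp
    have "{a<..Suc b} = insert (Suc b) {a<..b}" using ab by auto
    then have "(\<Sum>j\<in>{a<..Suc b}. (1/2::real) ^ (j - a))
                 = (1/2) ^ (Suc b - a) + (1 - (1/2) ^ (b - a))"
      using Suc.IH[OF ab] by simp
    also have "\<dots> = 1 - (1/2) ^ (Suc b - a)" using ab by (simp add: Suc_diff_le)
    finally show ?thesis .
  qed simp
qed

lemma sum_half_powers_below: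
  "a \<le> b \<Longrightarrow> (\<Sum>i\<in>{a..<b}. (1/2::real) ^ (b - i)) = 1 - (1/2) ^ (b - a)"
proof (induction b)
  case 0
  then show ?case by simp
next
  case (Suc b)
  show ?case
  proof (cases "a = Suc b")
    case False
    with Suc.prems have ab: "a \<le> b" by simp
    have "(\<Sum>i\<in>{a..<b}. (1/2::real) ^ (Suc b - i)) = (1/2) * (\<Sum>i\<in>{a..<b}. (1/2) ^ (b - i))"
      unfolding sum_distrib_left by (intro sum.cong) (auto simp: Suc_diff_le)
    then have "(\<Sum>i\<in>{a..<Suc b}. (1/2::real) ^ (Suc b - i)) = 1/2 + (1/2) * (1 - (1/2) ^ (b - a))"
      using ab Suc.IH[OF ab] by simp
    also have "\<dots> = 1 - (1/2) ^ (Suc b - a)" using ab by (simp add: Suc_diff_le field_simps)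
    finally show ?thesis .
  qed simp
qed

lemma sum_pair_weight_below:
  assumes "1 \<le> m" "m \<le> n - 2"
  shows "(\<Sum>i<m. pair_weight n i m) = 1/2"
proof -
  have "{..<m} = insert 0 {1..<m}" using assms by auto
  then have "(\<Sum>i<m. pair_weight n i m) = pair_weight n 1 m + (\<Sum>i\<in>{1..<m}. pair_weight n i m)"
    by (simp add: pair_weight_first)
  also have "\<dots> = ((1/2) ^ (m - 1) + (\<Sum>i\<in>{1..<m}. (1/2) ^ (m - i))) / 2"
    using assms by (simp add: pair_weight_inner sum_divide_distrib add_divide_distrib)
  also have "\<dots> = 1/2" using assms by (simp add: sum_half_powers_below)
  finally show ?thesis .
qed

lemma sum_pair_weight_above:
  assumes "1 \<le> m" "m \<le> n - 2"
  shows "(\<Sum>j\<in>{m<..<n}. pair_weight n m j) = 1/2"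
proof -
  have n: "3 \<le> n" using assms by linarith
  have "{m<..<n} = insert (n - 1) {m<..n - 2}" "n - 1 \<notin> {m<..n - 2}" using assms by auto
  then have "(\<Sum>j\<in>{m<..<n}. pair_weight n m j)
               = pair_weight n m (n - 2) + (\<Sum>j\<in>{m<..n - 2}. pair_weight n m j)"
    using pair_weight_last[OF n, of m] by simp
  also have "\<dots> = ((1/2) ^ (n - 2 - m) + (\<Sum>j\<in>{m<..n - 2}. (1/2) ^ (j - m))) / 2"
    using assms by (simp add: pair_weight_inner sum_divide_distrib add_divide_distrib)
  also have "\<dots> = 1/2" using assms by (simp add: sum_half_powers_above)
  finally show ?thesis .
qed

lemma cut_edge_weight_singleton_inner:
  assumes "3 \<le> n" "v \<le> n - 2"
  shows "cut_weight n (edge_weight n) {v} = 1"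
proof -
  have "{v} \<subseteq> {0..<n}" using assms by simp
  then have "cut_weight n (edge_weight n) {v} = (\<Sum>j\<in>{0..<n} - {v}. pair_weight n v j)"
    by (simp add: cut_weight_eq_pair_sum edge_weight_doubleton)
  also have "\<dots> = 1"
  proof (cases "v = 0")
    case True
    have V: "{0..<n} - {0} = insert 1 {1<..<n}" using assms by auto
    have "(\<Sum>j\<in>{0..<n} - {0}. pair_weight n 0 j)
        = pair_weight n 1 1 + (\<Sum>j\<in>{1<..<n}. pair_weight n 1 j)"
      unfolding V by (simp add: pair_weight_first)
    with True assms show ?thesis by (simp add: pair_weight_inner sum_pair_weight_above)
  next
    case False
    have V: "{0..<n} - {v} = {..<v} \<union> {v<..<n}" using assms by auto
    have "(\<Sum>j\<in>{0..<n} - {v}. pair_weight n v j)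
        = (\<Sum>j<v. pair_weight n j v) + (\<Sum>j\<in>{v<..<n}. pair_weight n v j)"
      unfolding V by (subst sum.union_disjoint) (auto simp: pair_weight_commute)
    with False assms show ?thesis by (simp add: sum_pair_weight_below sum_pair_weight_above)
  qed
  finally show ?thesis .
qed

lemma cut_edge_weight_insert_max:
  assumes "3 \<le> n" "k \<le> n - 2" "Y \<subseteq> {..<k}"
  shows "cut_weight n (edge_weight n) (insert k Y)
           = cut_weight n (edge_weight n) Y + 1 - 2 * (\<Sum>i\<in>Y. pair_weight n i k)"
proof -
  have "Y \<subseteq> {0..<n}" "k < n" "k \<notin> Y" using assms by auto
  then show ?thesis
    using cut_weight_insert[of Y n k "edge_weight n"] cut_edge_weight_singleton_inner[OF assms(1,2)]
    by (simp add: edge_weight_doubleton)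
qed

lemma cut_edge_weight_atMost:
  assumes "3 \<le> n" "m \<le> n - 2"
  shows "cut_weight n (edge_weight n) {..m} = 1"
  using assms(2)
proof (induction m)
  case 0
  then show ?case using cut_edge_weight_singleton_inner[OF assms(1)] by simp
next
  case (Suc m)
  have "(\<Sum>i\<in>{..m}. pair_weight n i (Suc m)) = 1/2"
    using Suc.prems sum_pair_weight_below[of "Suc m" n] by (simp add: lessThan_Suc_atMost)
  moreover have "cut_weight n (edge_weight n) {..Suc m}
      = cut_weight n (edge_weight n) {..m} + 1 - 2 * (\<Sum>i\<in>{..m}. pair_weight n i (Suc m))"
    unfolding atMost_Suc using assms(1) Suc.prems by (intro cut_edge_weight_insert_max) auto
  ultimately show ?case using Suc by simp
qed

lemma cut_edge_weight_singleton:
  assumes "3 \<le> n" "v < n"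
  shows "cut_weight n (edge_weight n) {v} = 1"
proof (cases "v = n - 1")
  case True
  have "{..n - 2} \<subseteq> {0..<n}" "{0..<n} - {..n - 2} = {v}" using assms True by auto
  then have "delta n {v} = delta n {..n - 2}" using delta_complement by metis
  then show ?thesis using cut_edge_weight_atMost[OF assms(1) order_refl]
    by (simp add: cut_weight_def)
next
  case False
  with assms show ?thesis by (intro cut_edge_weight_singleton_inner) auto
qed

lemma sum_pair_weight_below_le:
  assumes "1 \<le> k" "k \<le> n - 2" "Y \<subseteq> {..<k}"
  shows "(\<Sum>i\<in>Y. pair_weight n i k) \<le> 1/2"
    and "(\<Sum>i\<in>Y. pair_weight n i k) = 1/2 \<Longrightarrow> Y = {..<k}"
proof -
  have split: "(\<Sum>i\<in>Y. pair_weight n i k) + (\<Sum>i\<in>{..<k} - Y. pair_weight n i k) = 1/2"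
    using sum.subset_diff[OF assms(3), of "\<lambda>i. pair_weight n i k"] sum_pair_weight_below[OF assms(1,2)]
    by simp
  have rest_nonneg: "0 \<le> (\<Sum>i\<in>{..<k} - Y. pair_weight n i k)"
    by (intro sum_nonneg) (simp add: less_imp_le pair_weight_pos)
  with split show "(\<Sum>i\<in>Y. pair_weight n i k) \<le> 1/2" by linarith
  assume half: "(\<Sum>i\<in>Y. pair_weight n i k) = 1/2"
  show "Y = {..<k}"
  proof (rule ccontr)
    assume "Y \<noteq> {..<k}"
    with assms(3) obtain i where "i \<in> {..<k} - Y" by blast
    then have "0 < (\<Sum>i\<in>{..<k} - Y. pair_weight n i k)"
      by (intro sum_pos2) (auto simp: less_imp_le pair_weight_pos)
    with split half show False by linarith
  qed
qed

lemma cut_edge_weight_ge_one: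
  assumes "3 \<le> n" "Y \<subseteq> {..<n - 1}" "Y \<noteq> {}"
  shows "1 \<le> cut_weight n (edge_weight n) Y"
proof -
  have "1 \<le> cut_weight n (edge_weight n) Y" if "k \<le> n - 1" "Y \<subseteq> {..<k}" "Y \<noteq> {}" for k Y
    using that
  proof (induction k arbitrary: Y)
    case 0
    then show ?case by simp
  next
    case (Suc k)
    show ?case
    proof (cases "k \<in> Y")
      case False
      with Suc.prems have "Y \<subseteq> {..<k}" by (auto simp: less_Suc_eq)
      with Suc show ?thesis by simp
    next
      case True
      let ?Y = "Y - {k}"
      have Y: "Y = insert k ?Y" "?Y \<subseteq> {..<k}" and k: "k \<le> n - 2"
        using True Suc.prems by auto
      show ?thesis
      proof (cases "?Y = {}")
        case True
        with Y k assms(1) show ?thesis by (simp add: cut_edge_weight_singleton_inner)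
      next
        case False
        then have "1 \<le> k" using Y(2) by auto
        have "1 \<le> cut_weight n (edge_weight n) ?Y" using Suc.IH[OF _ Y(2) False] Suc.prems by simp
        moreover have "(\<Sum>i\<in>?Y. pair_weight n i k) \<le> 1/2"
          using sum_pair_weight_below_le(1)[OF \<open>1 \<le> k\<close> k Y(2)] .
        moreover have "cut_weight n (edge_weight n) Y
            = cut_weight n (edge_weight n) ?Y + 1 - 2 * (\<Sum>i\<in>?Y. pair_weight n i k)"
          using cut_edge_weight_insert_max[OF assms(1) k Y(2)] Y(1) by simp
        ultimately show ?thesis by linarith
      qed
    qed
  qed
  with assms show ?thesis by blast
qed

lemma cut_edge_weight_eq_one_cases:
  assumes "3 \<le> n" "Y \<subseteq> {..<n - 1}" "Y \<noteq> {}" "cut_weight n (edge_weight n) Y = 1"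
  obtains v where "Y = {v}" | m where "Y = {..m}"
proof -
  define k where "k = Max Y"
  let ?Y = "Y - {k}"
  have fin: "finite Y" using assms(2) finite_subset by blast
  have "k \<in> Y" unfolding k_def using fin assms(3) by (rule Max_in)
  moreover have "?Y \<subseteq> {..<k}" unfolding k_def using fin by (auto intro: le_neq_implies_less)
  ultimately have Y: "Y = insert k ?Y" "?Y \<subseteq> {..<k}" and k: "k \<le> n - 2"
    using assms(2) by auto
  show ?thesis
  proof (cases "?Y = {}")
    case True
    with Y show ?thesis by (intro that(1)) auto
  next
    case False
    then have "1 \<le> k" using Y(2) by auto
    have "1 \<le> cut_weight n (edge_weight n) ?Y"
      using assms(1,2) False by (intro cut_edge_weight_ge_one) auto
    moreover have "cut_weight n (edge_weight n) Y
        = cut_weight n (edge_weight n) ?Y + 1 - 2 * (\<Sum>i\<in>?Y. pair_weight n i k)"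
      using cut_edge_weight_insert_max[OF assms(1) k Y(2)] Y(1) by simp
    ultimately have "(\<Sum>i\<in>?Y. pair_weight n i k) = 1/2"
      using assms(4) sum_pair_weight_below_le(1)[OF \<open>1 \<le> k\<close> k Y(2)] by linarith
    then have "?Y = {..<k}" by (rule sum_pair_weight_below_le(2)[OF \<open>1 \<le> k\<close> k Y(2)])
    with Y(1) have "Y = {..k}" by auto
    then show ?thesis by (rule that(2))
  qed
qed

lemma min_cut_value_edge_weight:
  assumes "3 \<le> n"
  shows "min_cut_value n (edge_weight n) = 1"
proof (rule min_cut_value_eqI)
  fix X assume "is_cut_side n X"
  then obtain Y where "Y \<subseteq> {..<n - 1}" "Y \<noteq> {}" "delta n Y = delta n X"
    by (rule is_cut_side_avoiding_last)
  then show "1 \<le> cut_weight n (edge_weight n) X"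
    using cut_edge_weight_ge_one[OF assms] by (metis cut_weight_def)
next
  show "is_cut_side n {0}" using assms by (intro is_cut_side_singleton) auto
  show "cut_weight n (edge_weight n) {0} = 1" using assms by (intro cut_edge_weight_singleton) auto
qed

definition tight_side :: "nat + nat \<Rightarrow> nat set" where
  "tight_side = case_sum (\<lambda>v. {v}) atMost"

definition tight_index :: "nat \<Rightarrow> (nat + nat) set" where
  "tight_index n = Inl ` {..<n} \<union> Inr ` {1..n - 3}"

lemma tight_side_is_min_cut:
  assumes "3 \<le> n" "x \<in> tight_index n"
  shows "is_cut_side n (tight_side x)" "cut_weight n (edge_weight n) (tight_side x) = 1"
  using assms
  by (auto simp: tight_index_def tight_side_def is_cut_side_singleton is_cut_side_atMost
      cut_edge_weight_singleton cut_edge_weight_atMost)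

lemma min_cuts_edge_weight:
  assumes n: "3 \<le> n"
  shows "min_cuts n (edge_weight n) = (\<lambda>x. delta n (tight_side x)) ` tight_index n"
proof (intro equalityI subsetI)
  fix D assume "D \<in> min_cuts n (edge_weight n)"
  then obtain X where X: "D = delta n X" "is_cut_side n X" "cut_weight n (edge_weight n) X = 1"
    unfolding min_cuts_def min_cut_value_edge_weight[OF n] by blast
  obtain Y where Y: "Y \<subseteq> {..<n - 1}" "Y \<noteq> {}" "delta n Y = D"
    using is_cut_side_avoiding_last[OF X(2)] X(1) by metis
  have "cut_weight n (edge_weight n) Y = 1" using X Y(3) by (simp add: cut_weight_def)
  with n Y(1,2) show "D \<in> (\<lambda>x. delta n (tight_side x)) ` tight_index n"
  proof (cases rule: cut_edge_weight_eq_one_cases)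
    case (1 v)
    with Y have "Inl v \<in> tight_index n" "D = delta n (tight_side (Inl v))"
      by (auto simp: tight_index_def tight_side_def)
    then show ?thesis by blast
  next
    case (2 m)
    with Y(1) have m: "m \<le> n - 2" by auto
    consider "m = 0" | "m = n - 2" | "1 \<le> m" "m \<le> n - 3" using m by linarith
    then show ?thesis
    proof cases
      case 1
      with 2 Y have "Inl 0 \<in> tight_index n" "D = delta n (tight_side (Inl 0))"
        using n by (auto simp: tight_index_def tight_side_def)
      then show ?thesis by blast
    next
      case 2
      have "{..m} \<subseteq> {0..<n}" "{0..<n} - {..m} = {n - 1}" using \<open>m = n - 2\<close> n by auto
      then have "D = delta n {n - 1}" using \<open>Y = {..m}\<close> Y(3) delta_complement by metis
      moreover have "Inl (n - 1) \<in> tight_index n" using n by (simp add: tight_index_def)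
      ultimately show ?thesis by (force simp: tight_side_def)
    next
      case 3
      with 2 Y have "Inr m \<in> tight_index n" "D = delta n (tight_side (Inr m))"
        by (auto simp: tight_index_def tight_side_def)
      then show ?thesis by blast
    qed
  qed
next
  fix D assume "D \<in> (\<lambda>x. delta n (tight_side x)) ` tight_index n"
  with n show "D \<in> min_cuts n (edge_weight n)"
    unfolding min_cuts_def min_cut_value_edge_weight[OF n] by (auto dest: tight_side_is_min_cut)
qed

lemma tight_combination_at_edge:
  assumes "i < j" "j < n"
  shows "(\<Sum>x\<in>tight_index n. fscale (c x) (chi (delta n (tight_side x)))) {i, j}
           = c (Inl i) + c (Inl j) + (\<Sum>m\<in>{m\<in>{1..n - 3}. i \<le> m \<and> m < j}. c (Inr m))"
proof -
  have ij: "i < n" "i \<noteq> j" using assms by auto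
  have "(\<Sum>x\<in>tight_index n. fscale (c x) (chi (delta n (tight_side x)))) {i, j}
      = (\<Sum>v<n. c (Inl v) * chi (delta n {v}) {i, j})
        + (\<Sum>m\<in>{1..n - 3}. c (Inr m) * chi (delta n {..m}) {i, j})"
  proof -
    have "(\<Sum>x\<in>tight_index n. fscale (c x) (chi (delta n (tight_side x)))) {i, j}
        = (\<Sum>x\<in>Inl ` {..<n} \<union> Inr ` {1..n - 3}. c x * chi (delta n (tight_side x)) {i, j})"
      by (simp add: sum_fun_apply fscale_def tight_index_def)
    also have "\<dots> = (\<Sum>x\<in>Inl ` {..<n}. c x * chi (delta n (tight_side x)) {i, j})
                    + (\<Sum>x\<in>Inr ` {1..n - 3}. c x * chi (delta n (tight_side x)) {i, j})"
      by (rule sum.union_disjoint) auto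
    finally show ?thesis by (simp add: sum.reindex tight_side_def)
  qed
  also have "(\<Sum>v<n. c (Inl v) * chi (delta n {v}) {i, j})
      = (\<Sum>v<n. (if v = i then c (Inl v) else 0) + (if v = j then c (Inl v) else 0))"
    using ij by (intro sum.cong) (auto simp: chi_delta_doubleton[OF ij(1) assms(2) ij(2)])
  also have "\<dots> = c (Inl i) + c (Inl j)" using assms by (simp add: sum.distrib)
  also have "(\<Sum>m\<in>{1..n - 3}. c (Inr m) * chi (delta n {..m}) {i, j})
      = (\<Sum>m\<in>{1..n - 3}. if i \<le> m \<and> m < j then c (Inr m) else 0)"
    using assms by (intro sum.cong) (auto simp: chi_delta_doubleton[OF ij(1) assms(2) ij(2)])
  also have "\<dots> = (\<Sum>m\<in>{m\<in>{1..n - 3}. i \<le> m \<and> m < j}. c (Inr m))"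
    by (rule sum.inter_filter[symmetric]) simp
  finally show ?thesis .
qed

lemma tight_combination_eq_zero:
  assumes n: "3 \<le> n"
    and zero: "(\<Sum>x\<in>tight_index n. fscale (c x) (chi (delta n (tight_side x)))) = 0"
  shows "\<forall>x\<in>tight_index n. c x = 0"
proof -
  define a where "a v = c (Inl v)" for v
  define b where "b i j = (\<Sum>m\<in>{m\<in>{1..n - 3}. i \<le> m \<and> m < j}. c (Inr m))" for i j
  have edge: "a i + a j + b i j = 0" if "i < j" "j < n" for i j
    using tight_combination_at_edge[OF that, of c] zero unfolding a_def b_def by simp
  have inner: "a j = 0" if "1 \<le> j" "j \<le> n - 2" for j
  proof -
    have "b 0 (n - 1) = b 0 j + b j (n - 1)"
    proof -
      have split: "{m\<in>{1..n - 3}. 0 \<le> m \<and> m < n - 1}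
          = {m\<in>{1..n - 3}. 0 \<le> m \<and> m < j} \<union> {m\<in>{1..n - 3}. j \<le> m \<and> m < n - 1}"
        by auto
      show ?thesis unfolding b_def split by (rule sum.union_disjoint) auto
    qed
    moreover have "0 < j" "j < n - 1" using that n by auto
    then have "a 0 + a j + b 0 j = 0" "a j + a (n - 1) + b j (n - 1) = 0"
      "a 0 + a (n - 1) + b 0 (n - 1) = 0"
      by (auto intro: edge)
    ultimately show ?thesis by linarith
  qed
  have "b 0 1 = 0" "b (n - 2) (n - 1) = 0" unfolding b_def by (auto intro: sum.neutral)
  then have ends: "a 0 = 0" "a (n - 1) = 0"
    using edge[of 0 1] edge[of "n - 2" "n - 1"] inner[of 1] inner[of "n - 2"] n by simp_all
  have vertices: "a v = 0" if "v < n" for v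
    using that inner ends by (cases "v = 0 \<or> v = n - 1") auto
  moreover have "c (Inr m) = 0" if "1 \<le> m" "m \<le> n - 3" for m
  proof -
    have "b m (Suc m) = c (Inr m)"
    proof -
      have "{k\<in>{1..n - 3}. m \<le> k \<and> k < Suc m} = {m}" using that by auto
      then show ?thesis unfolding b_def by simp
    qed
    with edge[of m "Suc m"] vertices[of m] vertices[of "Suc m"] that n show ?thesis by simp
  qed
  ultimately show ?thesis unfolding tight_index_def a_def by auto
qed

lemma cdim_edge_weight:
  assumes n: "3 \<le> n"
  shows "cdim n (edge_weight n) = 2 * n - 3"
proof -
  have "card (tight_index n) = n + (n - 3)"
    unfolding tight_index_def by (subst card_Un_disjoint) (auto simp: card_image)
  moreover have "fvs.dim ((\<lambda>x. chi (delta n (tight_side x))) ` tight_index n) = card (tight_index n)"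
    using tight_combination_eq_zero[OF n] by (intro dim_image_eq_card) (simp add: tight_index_def)
  ultimately show ?thesis
    using n unfolding cdim_def min_cuts_edge_weight[OF n] image_image by simp
qed

theorem theorem16:
  fixes n :: nat
  assumes "n \<ge> 2"
  shows "\<exists>w :: nat set \<Rightarrow> real.
           (\<forall>e \<in> edges n. w e > 0) \<and>
           cdim n w = 2 * n - 3 \<and>
           min_cut_value n w = 1 \<and>
           (\<forall>v < n. delta n {v} \<in> min_cuts n w)"
proof (cases "n = 2")
  case True
  show ?thesis
    unfolding True
    by (intro exI[of _ "\<lambda>_. 1"])
      (simp add: cdim_two min_cut_value_two min_cuts_two delta_two is_cut_side_singleton)
next
  case False
  with assms have n: "3 \<le> n" by simp
  have "delta n {v} \<in> min_cuts n (edge_weight n)" if "v < n" for v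
    using that unfolding min_cuts_edge_weight[OF n] tight_index_def tight_side_def by force
  with n show ?thesis
    by (intro exI[of _ "edge_weight n"])
      (simp add: edge_weight_def pair_weight_pos cdim_edge_weight min_cut_value_edge_weight)
qed

end
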